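(* Let $\phi$ be the real root of $x^3=x^2+x+1$ and let $\phi_1$ be one of its two non-real roots. Define \[\psi_1=\frac{\phi_1^3+\phi_1^2}{\phi_1^2+2\phi_1+3},\qquad \zeta_1=\frac{\phi_1^3}{\phi_1^2+2\phi_1+3}.\] For integers $k,l$ put \[\alpha=\frac{k\phi^2+(k+l)\phi^3}{\phi^2+2\phi+3},\qquad \beta=\left|2(k\psi_1+l\zeta_1)\right|.\] Then for all integers $k,l$, $|\alpha|\le |k|+|l|$ and $\beta\ge \frac{|k|+|l|}{31}$.
   Context: The value of $\beta$ does not depend on which of the two complex-conjugate non-real roots is chosen as $\phi_1$. *)

theory Defs
  imports Complex_Main
begin

end

theory Submission
  imports Defs
begin

(* Modulo x^3 = x^2 + x + 1 one has (x^2 + 2x + 3)(x^2 - 5x + 8) = 22, so the quotients defining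
   psi_1 and zeta_1 are quadratic polynomials in phi_1 divided by 22. Writing phi_1 = a + bi, the
   real part a is the root of 4a^3 - 4a^2 + 1 in (-1/2, -2/5) and b^2 = 3a^2 - 2a - 1; on that
   interval the real part of 2(k psi_1 + l zeta_1) is dominated by the l-term and its imaginary
   part by the k-term, which gives beta >= 5(|k| + |l|)/44.
   For alpha, the cubic turns the numerator into k(2phi^2 + phi + 1) + l(phi^2 + phi + 1), and
   since -1 <= phi <= 2 both coefficients lie between 0 and the denominator. *)

lemma abs_lincomb_le_if_coeffs_bounded:
  fixes k l u v D :: real
  assumes "0 \<le> u" "u \<le> D" "0 \<le> v" "v \<le> D"
  shows "\<bar>k * u + l * v\<bar> \<le> (\<bar>k\<bar> + \<bar>l\<bar>) * D"
proof -
  have "\<bar>k * u + l * v\<bar> \<le> \<bar>k\<bar> * u + \<bar>l\<bar> * v"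
    using abs_triangle_ineq[of "k * u" "l * v"] assms by (simp add: abs_mult)
  also have "\<dots> \<le> \<bar>k\<bar> * D + \<bar>l\<bar> * D"
    using assms by (intro add_mono mult_left_mono) auto
  finally show ?thesis by (simp add: algebra_simps)
qed

lemma tribonacci_real_root_bounds:
  fixes p :: real
  assumes "p ^ 3 = p ^ 2 + p + 1"
  shows "-1 \<le> p" "p \<le> 2"
proof -
  have pos: "0 < p ^ 2 + p + 1"
    using zero_le_power2[of "p + 1/2"] by (simp add: power2_eq_square algebra_simps)
  have "(p - 2) * (p ^ 2 + p + 1) = -1"
    using assms by (simp add: power2_eq_square power3_eq_cube algebra_simps)
  with pos show "p \<le> 2"
    by (smt (verit) mult_pos_pos)
  have "(p + 1) * (p - 1) ^ 2 = 2"
    using assms by (simp add: power2_eq_square power3_eq_cube algebra_simps)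
  then show "-1 \<le> p"
    by (smt (verit) mult_nonpos_nonneg zero_le_power2)
qed

lemma abs_tribonacci_alpha_le:
  fixes p k l :: real
  assumes root: "p ^ 3 = p ^ 2 + p + 1"
  shows "\<bar>(k * p ^ 2 + (k + l) * p ^ 3) / (p ^ 2 + 2 * p + 3)\<bar> \<le> \<bar>k\<bar> + \<bar>l\<bar>"
proof -
  define D where "D = p ^ 2 + 2 * p + 3"
  have D_pos: "0 < D"
    using zero_le_power2[of "p + 1"] by (simp add: D_def power2_eq_square algebra_simps)
  have "-1 \<le> p" "p \<le> 2"
    using tribonacci_real_root_bounds[OF root] by auto
  then have "(p + 1) * (2 - p) \<ge> 0"
    by simp
  then have "p ^ 2 \<le> p + 2"
    by (simp add: power2_eq_square algebra_simps)
  moreover have "0 \<le> p ^ 2 + p + 1"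
    using zero_le_power2[of "p + 1/2"] by (simp add: power2_eq_square algebra_simps)
  ultimately have coeffs: "0 \<le> 2 * p ^ 2 + p + 1" "2 * p ^ 2 + p + 1 \<le> D"
    "0 \<le> p ^ 2 + p + 1" "p ^ 2 + p + 1 \<le> D"
    using \<open>-1 \<le> p\<close> zero_le_power2[of p] unfolding D_def by linarith+
  have "k * p ^ 2 + (k + l) * p ^ 3 = k * (2 * p ^ 2 + p + 1) + l * (p ^ 2 + p + 1)"
    unfolding root by (simp add: algebra_simps)
  then have "\<bar>k * p ^ 2 + (k + l) * p ^ 3\<bar> \<le> (\<bar>k\<bar> + \<bar>l\<bar>) * D"
    using abs_lincomb_le_if_coeffs_bounded[OF coeffs] by simp
  with D_pos show ?thesis
    by (simp add: D_def[symmetric] pos_divide_le_eq)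
qed

lemma tribonacci_quotients_reduce:
  fixes x :: "'a :: field_char_0"
  assumes root: "x ^ 3 = x ^ 2 + x + 1"
  shows "(x ^ 3 + x ^ 2) / (x ^ 2 + 2 * x + 3) = (1 - 2 * x + 7 * x ^ 2) / 22"
    and "x ^ 3 / (x ^ 2 + 2 * x + 3) = (5 + x + 2 * x ^ 2) / 22"
proof -
  define T where "T = x ^ 2 - 5 * x + 8"
  have cubic: "x ^ 3 - x ^ 2 - x - 1 = 0"
    using root by simp
  have "(x ^ 2 + 2 * x + 3) * T = 22 + (x - 2) * (x ^ 3 - x ^ 2 - x - 1)"
    unfolding T_def by algebra
  then have inverse: "(x ^ 2 + 2 * x + 3) * T = 22"
    unfolding cubic by simp
  then have "T \<noteq> 0"
    by auto
  have reduce: "N / (x ^ 2 + 2 * x + 3) = N * T / 22" for N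
    using \<open>T \<noteq> 0\<close> by (simp flip: inverse)
  have "(x ^ 3 + x ^ 2) * T = 1 - 2 * x + 7 * x ^ 2 + (x ^ 2 - 3 * x + 1) * (x ^ 3 - x ^ 2 - x - 1)"
    unfolding T_def by algebra
  then show "(x ^ 3 + x ^ 2) / (x ^ 2 + 2 * x + 3) = (1 - 2 * x + 7 * x ^ 2) / 22"
    unfolding reduce cubic by simp
  have "x ^ 3 * T = 5 + x + 2 * x ^ 2 + (x ^ 2 - 4 * x + 5) * (x ^ 3 - x ^ 2 - x - 1)"
    unfolding T_def by algebra
  then show "x ^ 3 / (x ^ 2 + 2 * x + 3) = (5 + x + 2 * x ^ 2) / 22"
    unfolding reduce cubic by simp
qed

lemma tribonacci_nonreal_root_parts:
  fixes a b :: real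
  assumes "Complex a b ^ 3 = Complex a b ^ 2 + Complex a b + 1" and "b \<noteq> 0"
  shows "b ^ 2 = 3 * a ^ 2 - 2 * a - 1" and "4 * a ^ 3 - 4 * a ^ 2 + 1 = 0"
proof -
  have re: "a ^ 3 - 3 * a * b ^ 2 = a ^ 2 - b ^ 2 + a + 1"
    and im: "3 * a ^ 2 * b - b ^ 3 = 2 * a * b + b"
    using assms(1) by (simp_all add: complex_eq_iff power3_eq_cube power2_eq_square algebra_simps)
  from im have "b * (3 * a ^ 2 - b ^ 2 - 2 * a - 1) = 0"
    by algebra
  with \<open>b \<noteq> 0\<close> show b2: "b ^ 2 = 3 * a ^ 2 - 2 * a - 1"
    by simp
  from re b2 show "4 * a ^ 3 - 4 * a ^ 2 + 1 = 0"
    by algebra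
qed

lemma tribonacci_real_part_bounds:
  fixes a :: real
  assumes "4 * a ^ 3 - 4 * a ^ 2 + 1 = 0"
  shows "-1/2 < a" and "a < -2/5"
proof -
  have root: "a ^ 2 * (1 - a) = 1/4"
    using assms by (simp add: power2_eq_square power3_eq_cube algebra_simps)
  have "a < 0"
  proof (rule ccontr)
    assume "\<not> a < 0"
    then have "0 \<le> (a - 2/3) ^ 2 * (a + 1/3)"
      by simp
    also have "\<dots> = 4/27 - a ^ 2 * (1 - a)"
      by algebra
    finally show False
      using root by simp
  qed
  show "-1/2 < a"
  proof (rule ccontr)
    assume "\<not> -1/2 < a"
    then have "(1/2) ^ 2 \<le> (- a) ^ 2"
      by (intro power_mono) auto
    then have "1/4 * (3/2) \<le> a ^ 2 * (1 - a)"
      using \<open>\<not> -1/2 < a\<close> by (intro mult_mono) (auto simp: power2_eq_square)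
    then show False
      using root by simp
  qed
  show "a < -2/5"
  proof (rule ccontr)
    assume "\<not> a < -2/5"
    then have "(- a) ^ 2 \<le> (2/5) ^ 2"
      using \<open>a < 0\<close> by (intro power_mono) auto
    then have "a ^ 2 * (1 - a) \<le> 4/25 * (7/5)"
      using \<open>\<not> a < -2/5\<close> \<open>a < 0\<close> by (intro mult_mono) (auto simp: power2_eq_square)
    then show False
      using root by simp
  qed
qed

lemma cmod_tribonacci_combination_ge:
  fixes x :: complex and k l :: real
  assumes root: "x ^ 3 = x ^ 2 + x + 1" and "Im x \<noteq> 0"
  shows "5/4 * (\<bar>k\<bar> + \<bar>l\<bar>) \<le> cmod (of_real k * (1 - 2 * x + 7 * x ^ 2) + of_real l * (5 + x + 2 * x ^ 2))"
    (is "_ \<le> cmod ?w")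
proof -
  obtain a b where x: "x = Complex a b"
    using complex.exhaust by blast
  have "b \<noteq> 0"
    using \<open>Im x \<noteq> 0\<close> by (simp add: x)
  note parts = tribonacci_nonreal_root_parts[OF root[unfolded x] this]
  note a_bounds = tribonacci_real_part_bounds[OF parts(2)]
  define A B C E where "A = 8 + 12 * a - 14 * a ^ 2" and "B = 7 + 5 * a - 4 * a ^ 2"
    and "C = b * (14 * a - 2)" and "E = b * (1 + 4 * a)"
  have "Re ?w = k * (1 - 2 * a + 7 * (a ^ 2 - b ^ 2)) + l * (5 + a + 2 * (a ^ 2 - b ^ 2))"
    by (simp add: x power2_eq_square algebra_simps)
  then have Re: "Re ?w = k * A + l * B"
    unfolding parts(1) A_def B_def by (simp add: algebra_simps)
  have Im: "Im ?w = k * C + l * E"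
    unfolding C_def E_def by (simp add: x power2_eq_square algebra_simps)
  have a_sq: "4/25 < a ^ 2" "a ^ 2 < 1/4"
  proof -
    have "(2/5) ^ 2 < (- a) ^ 2" "(- a) ^ 2 < (1/2) ^ 2"
      using a_bounds by (intro power_strict_mono; simp)+
    then show "4/25 < a ^ 2" "a ^ 2 < 1/4"
      by (simp_all add: power_divide)
  qed
  have A: "\<bar>A\<bar> \<le> 3/2" and B: "7/2 \<le> B"
    using a_bounds a_sq unfolding A_def B_def abs_le_iff by auto
  have b_sq: "7/25 < b ^ 2" "b ^ 2 < 3/4"
    using a_bounds a_sq parts(1) by auto
  have "(38/5) ^ 2 \<le> (14 * a - 2) ^ 2"
    unfolding abs_le_square_iff[symmetric] using a_bounds by auto
  then have "7/25 * (38/5) ^ 2 \<le> b ^ 2 * (14 * a - 2) ^ 2"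
    using b_sq by (intro mult_mono) auto
  then have "4 ^ 2 \<le> C ^ 2"
    by (simp add: C_def power_mult_distrib power_divide)
  then have C: "4 \<le> \<bar>C\<bar>"
    using abs_le_square_iff[of 4 C] by simp
  have "(1 + 4 * a) ^ 2 \<le> 1 ^ 2"
    unfolding abs_le_square_iff[symmetric] using a_bounds by auto
  then have "b ^ 2 * (1 + 4 * a) ^ 2 \<le> 3/4 * 1"
    using b_sq by (intro mult_mono) auto
  then have "E ^ 2 \<le> 1 ^ 2"
    by (simp add: E_def power_mult_distrib)
  then have E: "\<bar>E\<bar> \<le> 1"
    using abs_le_square_iff[of E 1] by simp
  have "7/2 * \<bar>l\<bar> - 3/2 * \<bar>k\<bar> \<le> \<bar>l\<bar> * \<bar>B\<bar> - \<bar>k\<bar> * \<bar>A\<bar>"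
    using A B mult_left_mono[OF A, of "\<bar>k\<bar>"] mult_left_mono[OF B, of "\<bar>l\<bar>"] by simp
  also have "\<dots> \<le> \<bar>Re ?w\<bar>"
    unfolding Re using abs_triangle_ineq[of "k * A + l * B" "- (k * A)"] by (simp add: abs_mult)
  finally have Re_ge: "7/2 * \<bar>l\<bar> - 3/2 * \<bar>k\<bar> \<le> \<bar>Re ?w\<bar>" .
  have "4 * \<bar>k\<bar> - \<bar>l\<bar> \<le> \<bar>k\<bar> * \<bar>C\<bar> - \<bar>l\<bar> * \<bar>E\<bar>"
    using mult_left_mono[OF C, of "\<bar>k\<bar>"] mult_left_mono[OF E, of "\<bar>l\<bar>"] by simp
  also have "\<dots> \<le> \<bar>Im ?w\<bar>"
    unfolding Im using abs_triangle_ineq[of "k * C + l * E" "- (l * E)"] by (simp add: abs_mult)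
  finally have Im_ge: "4 * \<bar>k\<bar> - \<bar>l\<bar> \<le> \<bar>Im ?w\<bar>" .
  from Re_ge Im_ge
  show ?thesis
    using abs_Re_le_cmod[of ?w] abs_Im_le_cmod[of ?w] by argo
qed

theorem lemma2:
  fixes \<phi> :: real and \<phi>\<^sub>1 :: complex and k l :: int
  assumes "\<phi> ^ 3 = \<phi> ^ 2 + \<phi> + 1"
    and "\<phi>\<^sub>1 ^ 3 = \<phi>\<^sub>1 ^ 2 + \<phi>\<^sub>1 + 1"
    and "Im \<phi>\<^sub>1 \<noteq> 0"
  shows "let \<psi>\<^sub>1 = (\<phi>\<^sub>1 ^ 3 + \<phi>\<^sub>1 ^ 2) / (\<phi>\<^sub>1 ^ 2 + 2 * \<phi>\<^sub>1 + 3);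
             \<zeta>\<^sub>1 = \<phi>\<^sub>1 ^ 3 / (\<phi>\<^sub>1 ^ 2 + 2 * \<phi>\<^sub>1 + 3);
             \<alpha> = (of_int k * \<phi> ^ 2 + of_int (k + l) * \<phi> ^ 3) / (\<phi> ^ 2 + 2 * \<phi> + 3);
             \<beta> = cmod (2 * (of_int k * \<psi>\<^sub>1 + of_int l * \<zeta>\<^sub>1))
         in \<bar>\<alpha>\<bar> \<le> real_of_int (\<bar>k\<bar> + \<bar>l\<bar>) \<and> \<beta> \<ge> real_of_int (\<bar>k\<bar> + \<bar>l\<bar>) / 31"
proof -
  let ?D = "\<phi>\<^sub>1 ^ 2 + 2 * \<phi>\<^sub>1 + 3"
  let ?N = "real_of_int (\<bar>k\<bar> + \<bar>l\<bar>)"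
  define W where "W = of_int k * (1 - 2 * \<phi>\<^sub>1 + 7 * \<phi>\<^sub>1 ^ 2) + of_int l * (5 + \<phi>\<^sub>1 + 2 * \<phi>\<^sub>1 ^ 2)"
  have alpha: "\<bar>(of_int k * \<phi> ^ 2 + of_int (k + l) * \<phi> ^ 3) / (\<phi> ^ 2 + 2 * \<phi> + 3)\<bar> \<le> ?N"
    using abs_tribonacci_alpha_le[OF assms(1), of "of_int k" "of_int l"] by simp
  have reduced: "2 * (of_int k * ((\<phi>\<^sub>1 ^ 3 + \<phi>\<^sub>1 ^ 2) / ?D) + of_int l * (\<phi>\<^sub>1 ^ 3 / ?D)) = W / 11"
    unfolding tribonacci_quotients_reduce[OF assms(2)] W_def by (simp add: field_simps)
  have W_ge: "5/4 * ?N \<le> cmod W"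
    using cmod_tribonacci_combination_ge[OF assms(2,3), of "of_int k" "of_int l"] by (simp add: W_def)
  have beta: "?N / 31 \<le> cmod (2 * (of_int k * ((\<phi>\<^sub>1 ^ 3 + \<phi>\<^sub>1 ^ 2) / ?D)
      + of_int l * (\<phi>\<^sub>1 ^ 3 / ?D)))"
    unfolding reduced norm_divide using W_ge by simp
  show ?thesis
    unfolding Let_def using alpha beta by simp
qed

end
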